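(* Let $(\preceq_s)_{s\in S}$ be a finite family of WQOs on a set $X$ and let $\preceq$ be its conjunction ($x\preceq y$ iff $x\preceq_s y$ for all $s\in S$). Then $I\subseteq X$ is an ideal of $(X,\preceq)$ if and only if $I=\bigcap_{s\in S}I_s$, where each $I_s$ is an ideal of $(X,\preceq_s)$ and $(I_s)_{s\in S}\in\mathrm{Adh}_S(I)$.
   Context: An ideal of a WQO is a nonempty, downward closed, directed subset (directed: any two elements have a common upper bound in the set). For $L\subseteq X$, $\mathrm{Adh}_S(L)$ is the set of families $(I_s)_{s\in S}$ of ideals ($I_s$ an ideal of $\preceq_s$) for which there is a $\preceq$-directed set $D\subseteq L$ with $I_s=\downarrow_{\preceq_s}D$ for every $s\in S$. *)

theory Defs
  imports Main
begin

definition wqo_on :: "'a set \<Rightarrow> ('a \<Rightarrow> 'a \<Rightarrow> bool) \<Rightarrow> bool" where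
  "wqo_on X R \<longleftrightarrow>
     (\<forall>x\<in>X. R x x) \<and>
     (\<forall>x\<in>X. \<forall>y\<in>X. \<forall>z\<in>X. R x y \<longrightarrow> R y z \<longrightarrow> R x z) \<and>
     (\<forall>f :: nat \<Rightarrow> 'a. (\<forall>i. f i \<in> X) \<longrightarrow> (\<exists>i j. i < j \<and> R (f i) (f j)))"

definition conj_ord :: "'s set \<Rightarrow> ('s \<Rightarrow> 'a \<Rightarrow> 'a \<Rightarrow> bool) \<Rightarrow> 'a \<Rightarrow> 'a \<Rightarrow> bool" where
  "conj_ord S le x y \<longleftrightarrow> (\<forall>s\<in>S. le s x y)"

definition directed_on :: "('a \<Rightarrow> 'a \<Rightarrow> bool) \<Rightarrow> 'a set \<Rightarrow> bool" where
  "directed_on R D \<longleftrightarrow> D \<noteq> {} \<and> (\<forall>x\<in>D. \<forall>y\<in>D. \<exists>z\<in>D. R x z \<and> R y z)"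

definition down_cl :: "'a set \<Rightarrow> ('a \<Rightarrow> 'a \<Rightarrow> bool) \<Rightarrow> 'a set \<Rightarrow> 'a set" where
  "down_cl X R D = {x\<in>X. \<exists>d\<in>D. R x d}"

definition ideal_on :: "'a set \<Rightarrow> ('a \<Rightarrow> 'a \<Rightarrow> bool) \<Rightarrow> 'a set \<Rightarrow> bool" where
  "ideal_on X R I \<longleftrightarrow> I \<subseteq> X \<and> I \<noteq> {} \<and>
     (\<forall>x\<in>X. \<forall>y\<in>I. R x y \<longrightarrow> x \<in> I) \<and>
     (\<forall>x\<in>I. \<forall>y\<in>I. \<exists>z\<in>I. R x z \<and> R y z)"

text \<open>Adh_S(L): families of ideals (I_s)_{s in S} induced by a conj-directed D \<subseteq> L.
  Families are functions 's \<Rightarrow> 'a set; only the values on S matter.\<close>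
definition Adh :: "'a set \<Rightarrow> 's set \<Rightarrow> ('s \<Rightarrow> 'a \<Rightarrow> 'a \<Rightarrow> bool) \<Rightarrow> 'a set \<Rightarrow> ('s \<Rightarrow> 'a set) set" where
  "Adh X S le L = {Is. (\<forall>s\<in>S. ideal_on X (le s) (Is s)) \<and>
     (\<exists>D. D \<subseteq> L \<and> directed_on (conj_ord S le) D \<and>
          (\<forall>s\<in>S. Is s = down_cl X (le s) D))}"

end

theory Submission
  imports Defs
begin

text \<open>The key fact is that for a
  set D directed for the conjunction \<preceq>, the \<preceq>-downward closure of D is the intersection of
  its \<preceq>_s-downward closures: if x lies below some d_s \<in> D in each \<preceq>_s, then a common
  \<preceq>-upper bound in D of these finitely many d_s lies above x in every \<preceq>_s. Applied to D = I,
  an ideal is the intersection of the ideals it generates in the single orders; conversely, a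
  family in Adh_S(I) intersects to the \<preceq>-downward closure of a directed set, which is an
  ideal.\<close>

definition quasi_order_on :: "'a set \<Rightarrow> ('a \<Rightarrow> 'a \<Rightarrow> bool) \<Rightarrow> bool" where
  "quasi_order_on X R \<longleftrightarrow>
     (\<forall>x\<in>X. R x x) \<and> (\<forall>x\<in>X. \<forall>y\<in>X. \<forall>z\<in>X. R x y \<longrightarrow> R y z \<longrightarrow> R x z)"

lemma quasi_order_onD:
  assumes "quasi_order_on X R"
  shows quasi_order_on_refl: "x \<in> X \<Longrightarrow> R x x"
    and quasi_order_on_trans: "\<lbrakk>x \<in> X; y \<in> X; z \<in> X; R x y; R y z\<rbrakk> \<Longrightarrow> R x z"
  using assms unfolding quasi_order_on_def by blast+

lemma wqo_on_imp_quasi_order_on: "wqo_on X R \<Longrightarrow> quasi_order_on X R"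
  unfolding wqo_on_def quasi_order_on_def by blast

lemma quasi_order_on_conj_ord:
  "(\<And>s. s \<in> S \<Longrightarrow> quasi_order_on X (le s)) \<Longrightarrow> quasi_order_on X (conj_ord S le)"
  unfolding quasi_order_on_def conj_ord_def by blast

lemma directed_on_conj_ord_component:
  "directed_on (conj_ord S le) D \<Longrightarrow> s \<in> S \<Longrightarrow> directed_on (le s) D"
  unfolding directed_on_def conj_ord_def by blast

lemma directed_on_finite_upper_bound:
  assumes R: "quasi_order_on X R" and "D \<subseteq> X" and dir: "directed_on R D"
    and "finite F" "F \<subseteq> D"
  shows "\<exists>z\<in>D. \<forall>f\<in>F. R f z"
  using \<open>finite F\<close> \<open>F \<subseteq> D\<close>
proof (induction F rule: finite_induct)
  case empty
  then show ?case using dir unfolding directed_on_def by auto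
next
  case (insert a F)
  then obtain z where z: "z \<in> D" "\<forall>f\<in>F. R f z" by auto
  moreover have "a \<in> D" using insert.prems by simp
  ultimately obtain w where w: "w \<in> D" "R a w" "R z w"
    using dir unfolding directed_on_def by blast
  have "R f w" if "f \<in> F" for f
    using quasi_order_on_trans[OF R, of f z w] that z w insert.prems \<open>D \<subseteq> X\<close> by auto
  with w show ?case by auto
qed

lemma down_cl_of_ideal_on:
  assumes "quasi_order_on X R" "ideal_on X R I"
  shows "down_cl X R I = I"
  using assms unfolding ideal_on_def down_cl_def quasi_order_on_def by blast

lemma ideal_on_down_cl:
  assumes R: "quasi_order_on X R" and DX: "D \<subseteq> X" and dir: "directed_on R D"
  shows "ideal_on X R (down_cl X R D)"
  unfolding ideal_on_def
proof (intro conjI ballI impI)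
  show "down_cl X R D \<subseteq> X" unfolding down_cl_def by auto
  show "down_cl X R D \<noteq> {}"
    using dir DX quasi_order_on_refl[OF R] unfolding directed_on_def down_cl_def by blast
next
  fix x y assume "x \<in> X" "y \<in> down_cl X R D" "R x y"
  then show "x \<in> down_cl X R D"
    using DX quasi_order_on_trans[OF R] unfolding down_cl_def by blast
next
  fix x y assume "x \<in> down_cl X R D" "y \<in> down_cl X R D"
  then obtain dx dy where d: "x \<in> X" "y \<in> X" "dx \<in> D" "dy \<in> D" "R x dx" "R y dy"
    unfolding down_cl_def by auto
  then obtain z where z: "z \<in> D" "R dx z" "R dy z"
    using dir unfolding directed_on_def by blast
  have "R x z" "R y z" using d z DX quasi_order_on_trans[OF R] by blast+
  moreover have "z \<in> down_cl X R D"
    using z DX quasi_order_on_refl[OF R] unfolding down_cl_def by blast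
  ultimately show "\<exists>z\<in>down_cl X R D. R x z \<and> R y z" by blast
qed

lemma Inter_down_cl_eq_down_cl_conj_ord:
  assumes "finite S" and le: "\<And>s. s \<in> S \<Longrightarrow> quasi_order_on X (le s)"
    and DX: "D \<subseteq> X" and dir: "directed_on (conj_ord S le) D"
  shows "X \<inter> (\<Inter>s\<in>S. down_cl X (le s) D) = down_cl X (conj_ord S le) D"
proof
  show "down_cl X (conj_ord S le) D \<subseteq> X \<inter> (\<Inter>s\<in>S. down_cl X (le s) D)"
    unfolding down_cl_def conj_ord_def by blast
next
  show "X \<inter> (\<Inter>s\<in>S. down_cl X (le s) D) \<subseteq> down_cl X (conj_ord S le) D"
  proof
    fix x assume x: "x \<in> X \<inter> (\<Inter>s\<in>S. down_cl X (le s) D)"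
    then have "\<forall>s\<in>S. \<exists>d\<in>D. le s x d" unfolding down_cl_def by auto
    then obtain d where d: "\<And>s. s \<in> S \<Longrightarrow> d s \<in> D \<and> le s x (d s)"
      by (metis bchoice)
    obtain z where z: "z \<in> D" "\<forall>s\<in>S. conj_ord S le (d s) z"
      using directed_on_finite_upper_bound[OF quasi_order_on_conj_ord[OF le] DX dir,
          of "d ` S"] \<open>finite S\<close> d by auto
    have "le s x z" if s: "s \<in> S" for s
    proof -
      have "le s (d s) z" using z s unfolding conj_ord_def by blast
      then show ?thesis
        using quasi_order_on_trans[OF le[OF s], of x "d s" z] d[OF s] z DX x by auto
    qed
    with x z show "x \<in> down_cl X (conj_ord S le) D"
      unfolding down_cl_def conj_ord_def by auto
  qed
qed

theorem mainTheorem10: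
  fixes X :: "'a set" and S :: "'s set" and le :: "'s \<Rightarrow> 'a \<Rightarrow> 'a \<Rightarrow> bool"
    and I :: "'a set"
  assumes "finite S"
    and "\<forall>s\<in>S. wqo_on X (le s)"
  shows "ideal_on X (conj_ord S le) I \<longleftrightarrow>
    (\<exists>Is :: 's \<Rightarrow> 'a set.
        (\<forall>s\<in>S. ideal_on X (le s) (Is s)) \<and>
        I = X \<inter> (\<Inter>s\<in>S. Is s) \<and>
        Is \<in> Adh X S le I)"
proof -
  have le: "\<And>s. s \<in> S \<Longrightarrow> quasi_order_on X (le s)"
    using assms(2) wqo_on_imp_quasi_order_on by blast
  note conj = quasi_order_on_conj_ord[OF le]
  show ?thesis
  proof
    assume ideal: "ideal_on X (conj_ord S le) I"
    then have IX: "I \<subseteq> X" and dir: "directed_on (conj_ord S le) I"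
      unfolding ideal_on_def directed_on_def by auto
    define Is where "Is s = down_cl X (le s) I" for s
    have ideals: "\<forall>s\<in>S. ideal_on X (le s) (Is s)"
      unfolding Is_def using ideal_on_down_cl[OF le IX directed_on_conj_ord_component[OF dir]]
      by blast
    moreover have "I = X \<inter> (\<Inter>s\<in>S. Is s)"
      using Inter_down_cl_eq_down_cl_conj_ord[OF assms(1) le IX dir]
        down_cl_of_ideal_on[OF conj ideal] by (simp add: Is_def)
    moreover have "Is \<in> Adh X S le I"
      unfolding Adh_def using ideals dir by (auto simp: Is_def intro!: exI[of _ I])
    ultimately show "\<exists>Is. (\<forall>s\<in>S. ideal_on X (le s) (Is s)) \<and> I = X \<inter> (\<Inter>s\<in>S. Is s)
        \<and> Is \<in> Adh X S le I" by blast
  next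
    assume "\<exists>Is. (\<forall>s\<in>S. ideal_on X (le s) (Is s)) \<and> I = X \<inter> (\<Inter>s\<in>S. Is s)
        \<and> Is \<in> Adh X S le I"
    then obtain Is D where I: "I = X \<inter> (\<Inter>s\<in>S. Is s)" and "D \<subseteq> I"
      and dir: "directed_on (conj_ord S le) D" and Is: "\<forall>s\<in>S. Is s = down_cl X (le s) D"
      unfolding Adh_def by blast
    then have DX: "D \<subseteq> X" by blast
    have "I = down_cl X (conj_ord S le) D"
      using I Is Inter_down_cl_eq_down_cl_conj_ord[OF assms(1) le DX dir] by simp
    then show "ideal_on X (conj_ord S le) I"
      using ideal_on_down_cl[OF conj DX dir] by simp
  qed
qed

end
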